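(* Let $f=(f_1,\dots,f_P)^\top:\mathbb{R}^N\to\mathbb{R}^P$ and $g=(g_1,\dots,g_M)^\top:\mathbb{R}^N\to\mathbb{R}^M$ satisfy: each $f_i$ is strictly convex and continuously differentiable; each $g_j$ is convex and continuously differentiable; the problem $\min\{f(x)\mid g_j(x)\le 0,\ j=1,\dots,M\}$ is bounded; and there exists $\bar x\in\mathbb{R}^N$ with $g_j(\bar x)<0$ for all $j=1,\dots,M$. Let $\mathbb{X}:=\{x\in\mathbb{R}^N\mid g_j(x)\le 0,\ j=1,\dots,M\}$ and $\mathcal{W}:=\{w\in\mathbb{R}^P_+\mid \mathbf{1}^\top w=1\}$. Let $z:\mathcal{W}\to\mathbb{R}^N$ be an arbitrary neural network, and define $x:\mathcal{W}\to\mathbb{R}^N$ by \[x(w):=(1-t^*(z(w)))\,z(w)+t^*(z(w))\,\bar x,\qquad t^*(z):=\max_{j:\ g_j(z)>0}\left\{\frac{g_j(z)}{g_j(z)-g_j(\bar x)}\right\},\] where $t^*(z):=0$ if $g_j(z)\le 0$ for all $j$. Then $x(w)\in\mathbb{X}$ for every $w\in\mathcal{W}$.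
   Context: $\mathbf{1}=(1,\dots,1)^\top\in\mathbb{R}^P$. The problem is bounded if there is $y\in\mathbb{R}^P$ with $f(x)\in y+\mathbb{R}^P_+$ for all $x\in\mathbb{X}$. A neural network $\mathcal{W}\to\mathbb{R}^N$ is a map of the form $y_{\ell+1}$ where $y_0(w)=w$ and $y_l(w)=\Phi_l(\theta_{l,b}+\theta_{l,w}y_{l-1}(w))$ for $l=1,\dots,\ell+1$, with bias vectors $\theta_{l,b}$, weight matrices $\theta_{l,w}$ of compatible sizes, and activation functions $\Phi_l$. *)

theory Defs
  imports "HOL-Analysis.Analysis"
begin

definition strictly_convex_on :: "'a::real_vector set \<Rightarrow> ('a \<Rightarrow> real) \<Rightarrow> bool" where
  "strictly_convex_on S h \<longleftrightarrow> convex S \<and>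
     (\<forall>x\<in>S. \<forall>y\<in>S. \<forall>u. x \<noteq> y \<and> 0 < u \<and> u < 1 \<longrightarrow>
        h (u *\<^sub>R x + (1 - u) *\<^sub>R y) < u * h x + (1 - u) * h y)"

definition cont_diff_real :: "('a::euclidean_space \<Rightarrow> real) \<Rightarrow> bool" where
  "cont_diff_real h \<longleftrightarrow> (\<exists>G. (\<forall>x. (h has_derivative (\<lambda>v. G x \<bullet> v)) (at x)) \<and> continuous_on UNIV G)"

text \<open>Neural networks. Intermediate vectors are real lists. A layer is a triple
  (bias vector, weight matrix given as list of rows, activation function).\<close>
type_synonym layer = "real list \<times> real list list \<times> (real list \<Rightarrow> real list)"

definition mat_vec :: "real list list \<Rightarrow> real list \<Rightarrow> real list" where
  "mat_vec A v = map (\<lambda>r. sum_list (map2 (*) r v)) A"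

definition layer_apply :: "layer \<Rightarrow> real list \<Rightarrow> real list" where
  "layer_apply L y = (case L of (b, A, \<Phi>) \<Rightarrow> \<Phi> (map2 (+) b (mat_vec A y)))"

definition nn_apply :: "layer list \<Rightarrow> real list \<Rightarrow> real list" where
  "nn_apply Ls w = foldl (\<lambda>y L. layer_apply L y) w Ls"

text \<open>Sizes are compatible: ds!l is the dimension of y_l; layer l maps R^(ds!l) to R^(ds!(l+1)).\<close>
definition nn_wf :: "layer list \<Rightarrow> nat list \<Rightarrow> bool" where
  "nn_wf Ls ds \<longleftrightarrow> length ds = length Ls + 1 \<and>
     (\<forall>l < length Ls. case Ls ! l of (b, A, \<Phi>) \<Rightarrow>
        length b = ds ! (l+1) \<and> length A = ds ! (l+1) \<and> (\<forall>r\<in>set A. length r = ds ! l) \<and>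
        (\<forall>v. length v = ds ! (l+1) \<longrightarrow> length (\<Phi> v) = ds ! (l+1)))"

text \<open>z : W \<rightarrow> R^N (with W \<subseteq> R^P) is a neural network on W. Coordinates of the finite
  index types are identified with {0..<CARD} via fixed bijections.\<close>
definition neural_network_on :: "(real^'p) set \<Rightarrow> (real^'p \<Rightarrow> real^'n) \<Rightarrow> bool" where
  "neural_network_on W z \<longleftrightarrow> (\<exists>Ls ds ep en.
     nn_wf Ls ds \<and> ds ! 0 = CARD('p) \<and> ds ! length Ls = CARD('n) \<and>
     bij_betw ep {..<CARD('p)} (UNIV :: 'p set) \<and> bij_betw en {..<CARD('n)} (UNIV :: 'n set) \<and>
     (\<forall>w\<in>W. z w = (\<chi> i. nn_apply Ls (map (\<lambda>k. w $ ep k) [0..<CARD('p)]) ! inv_into {..<CARD('n)} en i)))"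

definition t_star :: "(real^'n \<Rightarrow> real^'m) \<Rightarrow> real^'n \<Rightarrow> real^'n \<Rightarrow> real" where
  "t_star g xbar z = (if \<forall>j. g z $ j \<le> 0 then 0
     else Max ((\<lambda>j. g z $ j / (g z $ j - g xbar $ j)) ` {j. g z $ j > 0}))"

end

theory Submission
  imports Defs
begin

text \<open>The step \<open>t\<^sup>*(y)\<close> is the least \<open>t \<in> [0,1]\<close> for which the convex upper bound
  \<open>(1 - t) g\<^sub>j(y) + t g\<^sub>j(x\<^sub>0)\<close> of \<open>g\<^sub>j\<close> on the segment from \<open>y\<close> to the
  strictly feasible point \<open>x\<^sub>0\<close> is nonpositive for every \<open>j\<close>: for an active constraint this
  bound vanishes exactly at \<open>g\<^sub>j(y) / (g\<^sub>j(y) - g\<^sub>j(x\<^sub>0))\<close>, and inactive constraints stay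
  nonpositive for every \<open>t \<in> [0,1]\<close>. Convexity of each \<open>g\<^sub>j\<close> then makes
  \<open>(1 - t\<^sup>*) y + t\<^sup>* x\<^sub>0\<close> feasible, whatever point \<open>y\<close> the network produces.\<close>

lemma t_star_ge_ratio:
  assumes "g y $ j > 0"
  shows "g y $ j / (g y $ j - g xbar $ j) \<le> t_star g xbar y"
proof -
  have active: "\<not> (\<forall>j. g y $ j \<le> 0)" using assms by (auto simp: not_le)
  show ?thesis unfolding t_star_def if_not_P[OF active] using assms by (intro Max_ge) auto
qed

lemma t_star_attained:
  assumes "\<not> (\<forall>j. g y $ j \<le> 0)"
  obtains k where "g y $ k > 0" and "t_star g xbar y = g y $ k / (g y $ k - g xbar $ k)"
proof -
  let ?A = "(\<lambda>j. g y $ j / (g y $ j - g xbar $ j)) ` {j. g y $ j > 0}"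
  have "?A \<noteq> {}" using assms by (auto simp: not_le)
  then have "Max ?A \<in> ?A" by (intro Max_in) simp_all
  then obtain k where "g y $ k > 0" and "Max ?A = g y $ k / (g y $ k - g xbar $ k)" by auto
  with that show ?thesis unfolding t_star_def if_not_P[OF assms] by blast
qed

lemma t_star_bounds:
  assumes slater: "\<And>j. g xbar $ j < 0"
  shows "0 \<le> t_star g xbar y" and "t_star g xbar y \<le> 1"
proof -
  have "0 \<le> t_star g xbar y \<and> t_star g xbar y \<le> 1"
  proof (cases "\<forall>j. g y $ j \<le> 0")
    case True
    then show ?thesis by (simp add: t_star_def)
  next
    case False
    then obtain k where pos: "g y $ k > 0"
      and t: "t_star g xbar y = g y $ k / (g y $ k - g xbar $ k)"
      by (rule t_star_attained)
    have "g y $ k - g xbar $ k > g y $ k" using slater[of k] by simp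
    with pos show ?thesis by (simp add: t divide_le_eq_1)
  qed
  then show "0 \<le> t_star g xbar y" and "t_star g xbar y \<le> 1" by auto
qed

lemma t_star_interpolation_nonpos:
  assumes slater: "\<And>j. g xbar $ j < 0"
  shows "(1 - t_star g xbar y) * g y $ j + t_star g xbar y * g xbar $ j \<le> 0"
proof -
  define t where "t = t_star g xbar y"
  have t0: "0 \<le> t" and t1: "t \<le> 1" unfolding t_def using t_star_bounds[where g = g and xbar = xbar and y = y, OF slater] by auto
  show ?thesis unfolding t_def[symmetric]
  proof (cases "g y $ j > 0")
    case True
    have gap: "g y $ j - g xbar $ j > 0" using True slater[of j] by simp
    have "g y $ j / (g y $ j - g xbar $ j) \<le> t"
      unfolding t_def using True by (rule t_star_ge_ratio)
    then have "g y $ j \<le> t * (g y $ j - g xbar $ j)" using gap by (simp add: divide_le_eq)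
    then show "(1 - t) * g y $ j + t * g xbar $ j \<le> 0" by (simp add: algebra_simps)
  next
    case False
    have "(1 - t) * g y $ j \<le> 0" using False t1 by (simp add: mult_nonneg_nonpos)
    moreover have "t * g xbar $ j \<le> 0" using t0 slater[of j] by (simp add: mult_nonneg_nonpos)
    ultimately show "(1 - t) * g y $ j + t * g xbar $ j \<le> 0" by simp
  qed
qed

lemma t_star_combination_feasible:
  assumes convex: "\<And>j. convex_on S (\<lambda>x. g x $ j)"
    and slater: "\<And>j. g xbar $ j < 0"
    and "y \<in> S" and "xbar \<in> S"
  shows "g ((1 - t_star g xbar y) *\<^sub>R y + t_star g xbar y *\<^sub>R xbar) $ j \<le> 0"
proof -
  let ?t = "t_star g xbar y"
  have "g ((1 - ?t) *\<^sub>R y + ?t *\<^sub>R xbar) $ j \<le> (1 - ?t) * g y $ j + ?t * g xbar $ j"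
    using convex_onD[OF convex t_star_bounds[where g = g and xbar = xbar and y = y, OF slater]] assms(3,4) by simp
  also have "\<dots> \<le> 0" using slater by (rule t_star_interpolation_nonpos)
  finally show ?thesis .
qed

theorem proposition3p1:
  fixes f :: "real^'n \<Rightarrow> real^'p" and g :: "real^'n \<Rightarrow> real^'m"
    and xbar :: "real^'n" and z :: "real^'p \<Rightarrow> real^'n"
  assumes f_sc: "\<And>i. strictly_convex_on UNIV (\<lambda>x. f x $ i)"
    and f_C1: "\<And>i. cont_diff_real (\<lambda>x. f x $ i)"
    and g_cvx: "\<And>j. convex_on UNIV (\<lambda>x. g x $ j)"
    and g_C1: "\<And>j. cont_diff_real (\<lambda>x. g x $ j)"
    and bounded: "\<exists>y::real^'p. \<forall>x\<in>{x. \<forall>j. g x $ j \<le> 0}. \<forall>i. y $ i \<le> f x $ i"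
    and slater: "\<And>j. g xbar $ j < 0"
    and nn: "neural_network_on {w::real^'p. (\<forall>i. 0 \<le> w $ i) \<and> (\<Sum>i\<in>UNIV. w $ i) = 1} z"
  shows "\<forall>w\<in>{w::real^'p. (\<forall>i. 0 \<le> w $ i) \<and> (\<Sum>i\<in>UNIV. w $ i) = 1}.
           (1 - t_star g xbar (z w)) *\<^sub>R z w + t_star g xbar (z w) *\<^sub>R xbar
             \<in> {x. \<forall>j. g x $ j \<le> 0}"
  using t_star_combination_feasible[OF g_cvx slater] by blast

end
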